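(* Let $\mathbb{X}=\ell_4^2$. For $((x,y),(x_1,y_1))\in S_{\mathbb{X}}\times S_{\mathbb{X}}$, the pair $((x,y),(x_1,y_1))$ is not a CPP if and only if $xy=0$ and $x_1y_1\neq0$.
   Context: $\ell_4^2$ is $\mathbb{R}^2$ with norm $\|(a,b)\|=(a^4+b^4)^{1/4}$; $S_{\mathbb{X}}$ its unit sphere. $B(u,r)=\{v:\|v-u\|<r\}$. $u\perp_B v$ means $\|u+\lambda v\|\ge\|u\|$ for all real $\lambda$; $u^\perp=\{v:u\perp_Bv\}$. For $u,v\in S_{\mathbb{X}}$, $(u,v)$ is a CPP if there exist $r>0,\mu>0$ such that for all $z\in u^\perp\cap S_{\mathbb{X}}$, all $w\in v^\perp\cap S_{\mathbb{X}}$ and all $a,b\in\mathbb{R}$, $au+bz\in B(u,r)\cap S_{\mathbb{X}}$ implies $\|av+b\mu w\|\le1$. *)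

theory Defs
  imports "HOL-Analysis.Analysis"
begin

definition l4norm :: "real \<times> real \<Rightarrow> real" where
  "l4norm p = root 4 ((fst p)^4 + (snd p)^4)"

definition l4sphere :: "(real \<times> real) set" where
  "l4sphere = {p. l4norm p = 1}"

definition l4ball :: "real \<times> real \<Rightarrow> real \<Rightarrow> (real \<times> real) set" where
  "l4ball u r = {v. l4norm (v - u) < r}"

definition bj_orth :: "real \<times> real \<Rightarrow> real \<times> real \<Rightarrow> bool" where
  "bj_orth u v \<longleftrightarrow> (\<forall>t::real. l4norm (u + t *\<^sub>R v) \<ge> l4norm u)"

definition orth_set :: "real \<times> real \<Rightarrow> (real \<times> real) set" where
  "orth_set u = {v. bj_orth u v}"

definition is_CPP :: "real \<times> real \<Rightarrow> real \<times> real \<Rightarrow> bool" where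
  "is_CPP u v \<longleftrightarrow> (\<exists>r>0. \<exists>\<mu>>0.
     \<forall>z \<in> orth_set u \<inter> l4sphere. \<forall>w \<in> orth_set v \<inter> l4sphere. \<forall>a b :: real.
       a *\<^sub>R u + b *\<^sub>R z \<in> l4ball u r \<inter> l4sphere \<longrightarrow>
       l4norm (a *\<^sub>R v + (b * \<mu>) *\<^sub>R w) \<le> 1)"

end

theory Submission
  imports Defs
begin

text \<open>
  Work with the fourth power \<open>l4pow4\<close> of the norm. Since it is smooth and convex, Birkhoff-James
  orthogonality \<open>u \<perp>\<^sub>B z\<close> is the vanishing of its derivative, i.e. \<open>x\<^sup>3 z\<^sub>1 + y\<^sup>3 z\<^sub>2 = 0\<close>.
  For unit \<open>u \<perp>\<^sub>B z\<close> the sphere near \<open>u\<close> is described by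
  \<open>1 = a\<^sup>4 + 6 a\<^sup>2 b\<^sup>2 C + 4 a b\<^sup>3 D + b\<^sup>4\<close>, with \<open>C = x\<^sup>2 z\<^sub>1\<^sup>2 + y\<^sup>2 z\<^sub>2\<^sup>2\<close> measuring
  curvature. At the axis points (\<open>x y = 0\<close>) one has \<open>C = D = 0\<close>: the sphere is flat to
  fourth order. Elsewhere \<open>C \<ge> x\<^sup>4 y\<^sup>1\<^sup>2 / 2 > 0\<close>. Comparing the expansions at \<open>u\<close> and at
  \<open>v\<close>: if \<open>u\<close> is curved, the term \<open>6 a\<^sup>2 b\<^sup>2 C\<close> at \<open>u\<close> dominates the whole
  expansion at \<open>v\<close> once \<open>\<mu>\<close> and the radius are small; if both points are flat, both
  sides equal \<open>a\<^sup>4 + b\<^sup>4\<close>; if \<open>u\<close> is flat but \<open>v\<close> is curved, the quadratic term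
  \<open>6 a\<^sup>2 (b \<mu>)\<^sup>2 C\<close> at \<open>v\<close> beats \<open>b\<^sup>4\<close> for small \<open>b\<close>, whatever \<open>\<mu>\<close> is.
\<close>

definition l4pow4 :: "real \<times> real \<Rightarrow> real" where
  "l4pow4 p = fst p ^ 4 + snd p ^ 4"

definition cube_pairing :: "real \<times> real \<Rightarrow> real \<times> real \<Rightarrow> real" where
  "cube_pairing p q = fst p ^ 3 * fst q + snd p ^ 3 * snd q"

definition quad_coeff :: "real \<times> real \<Rightarrow> real \<times> real \<Rightarrow> real" where
  "quad_coeff p q = fst p ^ 2 * fst q ^ 2 + snd p ^ 2 * snd q ^ 2"

definition cubic_coeff :: "real \<times> real \<Rightarrow> real \<times> real \<Rightarrow> real" where
  "cubic_coeff p q = fst p * fst q ^ 3 + snd p * snd q ^ 3"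

lemma l4norm_le_iff: "l4norm p \<le> l4norm q \<longleftrightarrow> l4pow4 p \<le> l4pow4 q"
  unfolding l4norm_def l4pow4_def by simp

lemma l4norm_le_1_iff: "l4norm p \<le> 1 \<longleftrightarrow> l4pow4 p \<le> 1"
  using l4norm_le_iff[of p "(1, 0)"] by (simp add: l4norm_def l4pow4_def)

lemma l4sphere_iff: "p \<in> l4sphere \<longleftrightarrow> l4pow4 p = 1"
  using l4norm_le_iff[of p "(1, 0)"] l4norm_le_iff[of "(1, 0)" p]
  by (auto simp: l4sphere_def l4norm_def l4pow4_def)

lemma l4norm_less_iff:
  assumes "r > 0"
  shows "l4norm p < r \<longleftrightarrow> l4pow4 p < r ^ 4"
proof -
  have "r = root 4 (r ^ 4)"
    using assms by (simp add: real_root_power_cancel)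
  then show ?thesis
    by (metis l4norm_def l4pow4_def real_root_less_iff zero_less_numeral)
qed

lemma abs_less_of_pow4_less: "(X::real) ^ 4 < r ^ 4 \<Longrightarrow> 0 \<le> r \<Longrightarrow> \<bar>X\<bar> < r"
  by (rule power_less_imp_less_base[of _ 4]) (simp_all add: power_abs)

lemma coord_pow4_le_l4pow4: "fst p ^ 4 \<le> l4pow4 p" "snd p ^ 4 \<le> l4pow4 p"
  by (simp_all add: l4pow4_def)

lemma l4pow4_unit_abs_le_1:
  assumes "l4pow4 p = 1"
  shows "\<bar>fst p\<bar> \<le> 1" and "\<bar>snd p\<bar> \<le> 1"
proof -
  have "\<bar>fst p\<bar> ^ Suc 3 \<le> 1 ^ Suc 3" "\<bar>snd p\<bar> ^ Suc 3 \<le> 1 ^ Suc 3"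
    using assms coord_pow4_le_l4pow4[of p] by simp_all
  then show "\<bar>fst p\<bar> \<le> 1" and "\<bar>snd p\<bar> \<le> 1"
    by (meson power_le_imp_le_base zero_le_one)+
qed

lemma fourth_power_tangent_le: "A ^ 4 + 4 * A ^ 3 * B \<le> (A + B) ^ 4" for A B :: real
proof -
  have "(A + B) ^ 4 - A ^ 4 - 4 * A ^ 3 * B = B ^ 2 * (2 * A ^ 2 + (2 * A + B) ^ 2)"
    by algebra
  also have "\<dots> \<ge> 0"
    by simp
  finally show ?thesis
    by simp
qed

lemma l4pow4_add_ge: "l4pow4 p + 4 * cube_pairing p q \<le> l4pow4 (p + q)"
  using fourth_power_tangent_le[of "fst p" "fst q"] fourth_power_tangent_le[of "snd p" "snd q"]
  by (simp add: l4pow4_def cube_pairing_def algebra_simps)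

lemma l4pow4_scaleR: "l4pow4 (a *\<^sub>R p) = a ^ 4 * l4pow4 p"
  by (simp add: l4pow4_def algebra_simps)

lemma cube_pairing_scaleR: "cube_pairing (a *\<^sub>R p) (b *\<^sub>R q) = a ^ 3 * b * cube_pairing p q"
  by (simp add: cube_pairing_def algebra_simps)

lemma l4pow4_scaleR_add:
  "l4pow4 (a *\<^sub>R p + t *\<^sub>R q) = a ^ 4 * l4pow4 p + 4 * a ^ 3 * t * cube_pairing p q
     + 6 * a ^ 2 * t ^ 2 * quad_coeff p q + 4 * a * t ^ 3 * cubic_coeff p q + t ^ 4 * l4pow4 q"
  by (simp add: l4pow4_def cube_pairing_def quad_coeff_def cubic_coeff_def algebra_simps
      power2_eq_square power3_eq_cube power4_eq_xxxx)

lemma bj_orth_iff_cube_pairing: "bj_orth u v \<longleftrightarrow> cube_pairing u v = 0"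
proof
  define f where "f t = l4pow4 (u + t *\<^sub>R v)" for t
  assume "bj_orth u v"
  then have "f 0 \<le> f t" for t
    by (simp add: f_def bj_orth_def l4norm_le_iff)
  moreover have "DERIV f 0 :> 4 * cube_pairing u v"
    unfolding f_def l4pow4_def cube_pairing_def
    by (auto intro!: derivative_eq_intros)
  ultimately have "4 * cube_pairing u v = 0"
    by (meson DERIV_local_min zero_less_one)
  then show "cube_pairing u v = 0"
    by simp
next
  assume "cube_pairing u v = 0"
  then show "bj_orth u v"
    using l4pow4_add_ge[of u "_ *\<^sub>R v"] cube_pairing_scaleR[of 1 u]
    by (simp add: bj_orth_def l4norm_le_iff)
qed

lemma exists_unit_cube_orth: "\<exists>w. l4pow4 w = 1 \<and> cube_pairing v w = 0"
proof (cases "fst v ^ 12 + snd v ^ 12 = 0")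
  case True
  then have "v = 0"
    by (simp add: add_nonneg_eq_0_iff prod_eq_iff)
  then show ?thesis
    by (intro exI[of _ "(1, 0)"]) (simp add: l4pow4_def cube_pairing_def)
next
  case False
  define k where "k = root 4 (fst v ^ 12 + snd v ^ 12)"
  have "k ^ 4 = fst v ^ 12 + snd v ^ 12" "k \<noteq> 0"
    using False by (simp_all add: k_def)
  then have "l4pow4 (- (snd v ^ 3) / k, fst v ^ 3 / k) = 1"
    using False by (simp add: l4pow4_def power_divide add.commute flip: power_mult add_divide_distrib)
  moreover have "cube_pairing v (- (snd v ^ 3) / k, fst v ^ 3 / k) = 0"
    by (simp add: cube_pairing_def field_simps)
  ultimately show ?thesis
    by blast
qed

lemma l4pow4_scaleR_add_orth:
  assumes "l4pow4 u = 1" "l4pow4 w = 1" "cube_pairing u w = 0"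
  shows "l4pow4 (a *\<^sub>R u + t *\<^sub>R w)
    = a ^ 4 + 6 * a ^ 2 * t ^ 2 * quad_coeff u w + 4 * a * t ^ 3 * cubic_coeff u w + t ^ 4"
  using assms by (simp add: l4pow4_scaleR_add)

lemma quad_coeff_nonneg: "0 \<le> quad_coeff p q"
  by (simp add: quad_coeff_def)

lemma quad_coeff_unit_le_1:
  assumes "l4pow4 p = 1" "l4pow4 q = 1"
  shows "quad_coeff p q \<le> 1"
proof -
  have "a ^ 2 * b ^ 2 \<le> (a ^ 4 + b ^ 4) / 2" for a b :: real
    using zero_le_power2[of "a ^ 2 - b ^ 2"] by (simp add: power2_eq_square power4_eq_xxxx algebra_simps)
  then have "quad_coeff p q \<le> (fst p ^ 4 + fst q ^ 4) / 2 + (snd p ^ 4 + snd q ^ 4) / 2"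
    unfolding quad_coeff_def by (meson add_mono)
  also have "\<dots> = (l4pow4 p + l4pow4 q) / 2"
    by (simp add: l4pow4_def field_simps)
  finally have "quad_coeff p q \<le> (l4pow4 p + l4pow4 q) / 2" .
  with assms show ?thesis
    by simp
qed

lemma abs_cubic_coeff_unit_le_2:
  assumes "l4pow4 p = 1" "l4pow4 q = 1"
  shows "\<bar>cubic_coeff p q\<bar> \<le> 2"
proof -
  have "\<bar>fst p * fst q ^ 3\<bar> \<le> 1" "\<bar>snd p * snd q ^ 3\<bar> \<le> 1"
    using l4pow4_unit_abs_le_1[OF assms(1)] l4pow4_unit_abs_le_1[OF assms(2)]
    by (simp_all add: abs_mult power_abs power_le_one mult_le_one)
  then show ?thesis
    unfolding cubic_coeff_def by linarith
qed

lemma axis_orth_coeffs_eq_0: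
  assumes "l4pow4 u = 1" "fst u * snd u = 0" "cube_pairing u w = 0"
  shows "quad_coeff u w = 0" and "cubic_coeff u w = 0"
proof -
  have "fst u = 0 \<and> snd w = 0 \<or> snd u = 0 \<and> fst w = 0"
    using assms by (auto simp: l4pow4_def cube_pairing_def)
  then show "quad_coeff u w = 0" and "cubic_coeff u w = 0"
    by (auto simp: quad_coeff_def cubic_coeff_def)
qed

lemma cube_orth_fst_pow4:
  assumes w: "l4pow4 w = 1" and orth: "cube_pairing u w = 0"
  shows "fst w ^ 4 * (fst u ^ 12 + snd u ^ 12) = snd u ^ 12"
proof -
  obtain x y where [simp]: "u = (x, y)" by (cases u)
  obtain p q where [simp]: "w = (p, q)" by (cases w)
  have "x ^ 3 * p = - (y ^ 3 * q)"
    using orth by (simp add: cube_pairing_def eq_neg_iff_add_eq_0)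
  then have "(x ^ 3 * p) ^ 4 = (y ^ 3 * q) ^ 4"
    by simp
  then have cross: "x ^ 12 * p ^ 4 = y ^ 12 * q ^ 4"
    by (simp add: power_mult_distrib flip: power_mult)
  have "P * (X + Y) = Y * (P + Q)" if "X * P = Y * Q" for P Q X Y :: real
    using that by algebra
  from this[OF cross] have "p ^ 4 * (x ^ 12 + y ^ 12) = y ^ 12 * (p ^ 4 + q ^ 4)" .
  with w show ?thesis
    by (simp add: l4pow4_def)
qed

lemma quad_coeff_orth_ge:
  assumes u: "l4pow4 u = 1" and w: "l4pow4 w = 1" and orth: "cube_pairing u w = 0"
  shows "fst u ^ 4 * snd u ^ 12 / 2 \<le> quad_coeff u w"
proof -
  have "fst u ^ 12 + snd u ^ 12 \<le> 2"
    using l4pow4_unit_abs_le_1[OF u] power_le_one[of "\<bar>fst u\<bar>" 12] power_le_one[of "\<bar>snd u\<bar>" 12]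
    by (simp add: power_abs)
  then have "fst u ^ 4 * fst w ^ 4 * (fst u ^ 12 + snd u ^ 12) \<le> fst u ^ 4 * fst w ^ 4 * 2"
    by (intro mult_left_mono) simp_all
  then have "fst u ^ 4 * snd u ^ 12 / 2 \<le> (fst u ^ 2 * fst w ^ 2) ^ 2"
    using cube_orth_fst_pow4[OF w orth] by (simp add: mult.assoc power_mult_distrib flip: power_mult)
  also have "\<dots> \<le> fst u ^ 2 * fst w ^ 2"
  proof -
    have "fst u ^ 2 * fst w ^ 2 \<le> 1"
      using l4pow4_unit_abs_le_1[OF u] l4pow4_unit_abs_le_1[OF w]
      by (simp add: abs_square_le_1 mult_le_one)
    then show ?thesis
      using power_decreasing[of 1 2 "fst u ^ 2 * fst w ^ 2"] by simp
  qed
  also have "\<dots> \<le> quad_coeff u w"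
    by (simp add: quad_coeff_def)
  finally show ?thesis .
qed

lemma orth_ball_bounds:
  assumes u: "l4pow4 u = 1" and z: "l4pow4 z = 1" and orth: "cube_pairing u z = 0"
    and "0 < r" and small: "l4pow4 (s *\<^sub>R u + b *\<^sub>R z) < r ^ 4"
  shows "\<bar>s\<bar> < r" and "\<bar>b\<bar> < 3 * r"
proof -
  have "s ^ 4 \<le> l4pow4 (s *\<^sub>R u + b *\<^sub>R z)"
    using l4pow4_add_ge[of "s *\<^sub>R u" "b *\<^sub>R z"] u orth by (simp add: l4pow4_scaleR cube_pairing_scaleR)
  then show s: "\<bar>s\<bar> < r"
    using small \<open>0 < r\<close> by (intro abs_less_of_pow4_less) auto
  have "(s * fst u + b * fst z) ^ 4 < r ^ 4" "(s * snd u + b * snd z) ^ 4 < r ^ 4"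
    using coord_pow4_le_l4pow4[of "s *\<^sub>R u + b *\<^sub>R z"] small by simp_all
  then have "\<bar>s * fst u + b * fst z\<bar> < r" "\<bar>s * snd u + b * snd z\<bar> < r"
    using \<open>0 < r\<close> by (simp_all add: abs_less_of_pow4_less)
  moreover have "\<bar>s * fst u\<bar> \<le> \<bar>s\<bar>" "\<bar>s * snd u\<bar> \<le> \<bar>s\<bar>"
    using l4pow4_unit_abs_le_1[OF u] by (simp_all add: abs_mult mult_left_le)
  ultimately have "\<bar>b * fst z\<bar> < 2 * r" "\<bar>b * snd z\<bar> < 2 * r"
    using s by linarith+
  then have "\<bar>b * fst z\<bar> ^ 4 < (2 * r) ^ 4" "\<bar>b * snd z\<bar> ^ 4 < (2 * r) ^ 4"
    by (meson abs_ge_zero power_strict_mono zero_less_numeral)+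
  then have "(b * fst z) ^ 4 < 16 * r ^ 4" "(b * snd z) ^ 4 < 16 * r ^ 4"
    by simp_all
  moreover have "b ^ 4 = (b * fst z) ^ 4 + (b * snd z) ^ 4"
    using z by (simp add: l4pow4_def power_mult_distrib flip: distrib_left)
  moreover have "0 < r ^ 4"
    using \<open>0 < r\<close> by simp
  ultimately have "b ^ 4 < 81 * r ^ 4"
    by linarith
  then have "b ^ 4 < (3 * r) ^ 4"
    by simp
  then show "\<bar>b\<bar> < 3 * r"
    using \<open>0 < r\<close> by (intro abs_less_of_pow4_less) auto
qed

lemma abs_cubic_term_le:
  fixes a s e D :: real
  assumes "\<bar>D\<bar> \<le> 2" and "\<bar>s\<bar> \<le> e * \<bar>a\<bar>"
  shows "\<bar>4 * a * s ^ 3 * D\<bar> \<le> 8 * e * a ^ 2 * s ^ 2"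
proof -
  have "\<bar>4 * a * s ^ 3 * D\<bar> = 4 * (\<bar>a\<bar> * s ^ 2) * (\<bar>s\<bar> * \<bar>D\<bar>)"
    by (simp add: abs_mult power_abs power2_eq_square power3_eq_cube mult_ac)
  also have "\<dots> \<le> 4 * (\<bar>a\<bar> * s ^ 2) * (e * \<bar>a\<bar> * 2)"
    using assms by (intro mult_left_mono mult_mono) auto
  also have "\<dots> = 8 * e * (\<bar>a\<bar> * \<bar>a\<bar>) * s ^ 2"
    by (simp add: mult_ac)
  finally show ?thesis
    by (simp add: power2_eq_square)
qed

lemma quartic_lower_bound:
  fixes a b C D \<delta> :: real
  assumes "\<delta> \<le> C" and "\<bar>D\<bar> \<le> 2" and "\<bar>b\<bar> \<le> \<delta> / 4 * \<bar>a\<bar>"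
  shows "4 * \<delta> * a ^ 2 * b ^ 2 \<le> 6 * a ^ 2 * b ^ 2 * C + 4 * a * b ^ 3 * D + b ^ 4"
proof -
  have "\<delta> * (a ^ 2 * b ^ 2) \<le> C * (a ^ 2 * b ^ 2)"
    using assms(1) by (rule mult_right_mono) simp
  moreover have "8 * (\<delta> / 4) * a ^ 2 * b ^ 2 = 2 * (\<delta> * (a ^ 2 * b ^ 2))"
    "4 * \<delta> * a ^ 2 * b ^ 2 = 4 * (\<delta> * (a ^ 2 * b ^ 2))"
    "6 * a ^ 2 * b ^ 2 * C = 6 * (C * (a ^ 2 * b ^ 2))"
    by (simp_all add: mult_ac)
  moreover have "0 \<le> b ^ 4"
    by simp
  ultimately show ?thesis
    using abs_le_D2[OF abs_cubic_term_le[OF assms(2,3)]] by linarith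
qed

lemma quartic_upper_bound:
  fixes a s C D :: real
  assumes "0 \<le> C" "C \<le> 1" and "\<bar>D\<bar> \<le> 2" and "\<bar>s\<bar> \<le> \<bar>a\<bar> / 4"
  shows "6 * a ^ 2 * s ^ 2 * C + 4 * a * s ^ 3 * D + s ^ 4 \<le> 9 * a ^ 2 * s ^ 2"
proof -
  have "C * (a ^ 2 * s ^ 2) \<le> 1 * (a ^ 2 * s ^ 2)"
    using assms(2) by (rule mult_right_mono) simp
  moreover have "\<bar>s\<bar> \<le> 1 / 4 * \<bar>a\<bar>"
    using assms(4) by simp
  note abs_le_D1[OF abs_cubic_term_le[OF assms(3) this]]
  moreover have "s ^ 2 * s ^ 2 \<le> a ^ 2 * s ^ 2"
    using assms(4) by (intro mult_right_mono) (simp_all add: abs_le_square_iff[symmetric])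
  moreover have "8 * (1 / 4) * a ^ 2 * s ^ 2 = 2 * (a ^ 2 * s ^ 2)"
    "6 * a ^ 2 * s ^ 2 * C = 6 * (C * (a ^ 2 * s ^ 2))"
    "9 * a ^ 2 * s ^ 2 = 9 * (a ^ 2 * s ^ 2)"
    "s ^ 4 = s ^ 2 * s ^ 2"
    by (simp_all add: mult_ac flip: power_add)
  ultimately show ?thesis
    by linarith
qed

lemma quartic_gain:
  fixes c d \<mu> t :: real
  assumes "0 < c" "c \<le> 1" "\<bar>d\<bar> \<le> 2" "0 < \<mu>" "0 < t" "t * \<mu> \<le> c / 8" "t \<le> \<mu> * c"
  shows "t ^ 4 < 6 * c * (t * \<mu>) ^ 2 + 4 * d * (t * \<mu>) ^ 3 + (t * \<mu>) ^ 4"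
proof -
  define S where "S = t * \<mu>"
  have "0 < S"
    using assms by (simp add: S_def)
  have "t / \<mu> \<le> c"
    using assms by (simp add: divide_le_eq mult.commute)
  then have "(t / \<mu>) ^ 2 \<le> c ^ 2"
    using assms by (intro power_mono) simp_all
  also have "\<dots> \<le> c"
    using assms by (simp add: power2_eq_square mult_le_cancel_left1)
  finally have "(t / \<mu>) ^ 2 * S ^ 2 \<le> c * S ^ 2"
    by (rule mult_right_mono) simp
  moreover have "(t / \<mu>) ^ 2 * S ^ 2 = t ^ 4"
    using assms by (simp add: S_def power_mult_distrib power_divide flip: power_add)
  moreover have "\<bar>S\<bar> \<le> c / 8 * \<bar>1\<bar>"
    using assms \<open>0 < S\<close> by (simp add: S_def)
  note abs_le_D2[OF abs_cubic_term_le[OF assms(3) this]]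
  moreover have "8 * (c / 8) * 1 ^ 2 * S ^ 2 = c * S ^ 2" "4 * 1 * S ^ 3 * d = 4 * d * S ^ 3"
    by simp_all
  moreover have "0 < c * S ^ 2" "0 \<le> S ^ 4"
    using assms \<open>0 < S\<close> by simp_all
  ultimately show ?thesis
    unfolding S_def[symmetric] by linarith
qed

lemma exists_normalizing_factor:
  fixes t :: real
  assumes "0 < t" "t \<le> 1"
  shows "\<exists>a. 0 < a \<and> a \<le> 1 \<and> a ^ 4 * (1 + t ^ 4) = 1 \<and> 1 - a \<le> t"
proof (intro exI conjI)
  define k where "k = root 4 (1 + t ^ 4)"
  have "1 \<le> 1 + t ^ 4"
    by simp
  then have "1 \<le> k" "k ^ 4 = 1 + t ^ 4"
    by (simp_all add: k_def)
  show "0 < 1 / k" "1 / k \<le> 1"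
    using \<open>1 \<le> k\<close> by simp_all
  show a4: "(1 / k) ^ 4 * (1 + t ^ 4) = 1"
    using \<open>1 \<le> k\<close> by (simp add: \<open>k ^ 4 = 1 + t ^ 4\<close>[symmetric] power_divide)
  have "(1 / k) ^ 4 \<le> 1 / k"
    using \<open>0 < 1 / k\<close> \<open>1 / k \<le> 1\<close> power_decreasing[of 1 4 "1 / k"] by simp
  then have "1 - 1 / k \<le> 1 - (1 / k) ^ 4"
    by simp
  also have "\<dots> = (1 / k) ^ 4 * t ^ 4"
    using a4 by (simp add: algebra_simps)
  also have "\<dots> \<le> t ^ 4"
    using \<open>0 < 1 / k\<close> \<open>1 / k \<le> 1\<close> by (simp add: power_le_one mult_left_le_one_le)
  also have "\<dots> \<le> t"
    using assms power_decreasing[of 1 4 t] by simp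
  finally show "1 - 1 / k \<le> t" .
qed

lemma is_CPP_iff:
  "is_CPP u v \<longleftrightarrow> (\<exists>r>0. \<exists>\<mu>>0. \<forall>z w a b.
     cube_pairing u z = 0 \<longrightarrow> l4pow4 z = 1 \<longrightarrow> cube_pairing v w = 0 \<longrightarrow> l4pow4 w = 1 \<longrightarrow>
     l4pow4 ((a - 1) *\<^sub>R u + b *\<^sub>R z) < r ^ 4 \<longrightarrow> l4pow4 (a *\<^sub>R u + b *\<^sub>R z) = 1 \<longrightarrow>
     l4pow4 (a *\<^sub>R v + (b * \<mu>) *\<^sub>R w) \<le> 1)"
proof -
  have ball: "a *\<^sub>R u + b *\<^sub>R z \<in> l4ball u r \<longleftrightarrow> l4pow4 ((a - 1) *\<^sub>R u + b *\<^sub>R z) < r ^ 4"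
    if "0 < r" for r a b :: real and z
  proof -
    have "a *\<^sub>R u + b *\<^sub>R z - u = (a - 1) *\<^sub>R u + b *\<^sub>R z"
      by (simp add: algebra_simps)
    then show ?thesis
      by (simp only: l4ball_def mem_Collect_eq l4norm_less_iff[OF that])
  qed
  have inner: "(\<forall>z \<in> orth_set u \<inter> l4sphere. \<forall>w \<in> orth_set v \<inter> l4sphere. \<forall>a b.
       a *\<^sub>R u + b *\<^sub>R z \<in> l4ball u r \<inter> l4sphere \<longrightarrow> l4norm (a *\<^sub>R v + (b * \<mu>) *\<^sub>R w) \<le> 1)
    \<longleftrightarrow> (\<forall>z w a b.
     cube_pairing u z = 0 \<longrightarrow> l4pow4 z = 1 \<longrightarrow> cube_pairing v w = 0 \<longrightarrow> l4pow4 w = 1 \<longrightarrow>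
     l4pow4 ((a - 1) *\<^sub>R u + b *\<^sub>R z) < r ^ 4 \<longrightarrow> l4pow4 (a *\<^sub>R u + b *\<^sub>R z) = 1 \<longrightarrow>
     l4pow4 (a *\<^sub>R v + (b * \<mu>) *\<^sub>R w) \<le> 1)"
    if "0 < r" for r \<mu> :: real
    using ball[OF that]
    by (simp add: Ball_def orth_set_def bj_orth_iff_cube_pairing l4sphere_iff l4norm_le_1_iff)
      blast
  show ?thesis
    unfolding is_CPP_def by (intro ex_cong1 conj_cong refl inner)
qed

lemma l4pow4_axis_orth:
  assumes "l4pow4 u = 1" "fst u * snd u = 0" "l4pow4 z = 1" "cube_pairing u z = 0"
  shows "l4pow4 (a *\<^sub>R u + b *\<^sub>R z) = a ^ 4 + b ^ 4"
  using assms by (simp add: l4pow4_scaleR_add_orth axis_orth_coeffs_eq_0)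

lemma is_CPP_axis_axis:
  assumes "l4pow4 u = 1" "fst u * snd u = 0" "l4pow4 v = 1" "fst v * snd v = 0"
  shows "is_CPP u v"
  unfolding is_CPP_iff using assms
  by (intro exI[of _ 1] conjI allI impI) (simp_all add: l4pow4_axis_orth)

lemma axis_sphere_point_near:
  assumes u: "l4pow4 u = 1" "fst u * snd u = 0" and z: "l4pow4 z = 1" "cube_pairing u z = 0"
    and t: "0 < t" "t \<le> 1" "t \<le> r / 2"
  obtains a where "0 < a" "a ^ 4 * (1 + t ^ 4) = 1"
    "l4pow4 (a *\<^sub>R u + (a * t) *\<^sub>R z) = 1" "l4pow4 ((a - 1) *\<^sub>R u + (a * t) *\<^sub>R z) < r ^ 4"
proof -
  obtain a where a: "0 < a" "a \<le> 1" "a ^ 4 * (1 + t ^ 4) = 1" "1 - a \<le> t"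
    using exists_normalizing_factor[OF t(1,2)] by blast
  have "l4pow4 (a *\<^sub>R u + (a * t) *\<^sub>R z) = 1"
    using a(3) by (simp add: l4pow4_axis_orth[OF u z] algebra_simps)
  moreover have "l4pow4 ((a - 1) *\<^sub>R u + (a * t) *\<^sub>R z) < r ^ 4"
  proof -
    have "\<bar>a - 1\<bar> \<le> t"
      using a by simp
    then have "(a - 1) ^ 4 \<le> t ^ 4"
      using power_mono[of "\<bar>a - 1\<bar>" t 4] by simp
    moreover have "(a * t) ^ 4 \<le> t ^ 4"
      using a t by (simp add: power_mult_distrib power_le_one mult_left_le_one_le)
    moreover have "16 * t ^ 4 \<le> r ^ 4"
      using power_mono[OF t(3), of 4] t(1) by (simp add: power_divide)
    moreover have "0 < r ^ 4"
      using t by simp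
    ultimately show ?thesis
      unfolding l4pow4_axis_orth[OF u z] by linarith
  qed
  ultimately show ?thesis
    using a that by blast
qed

lemma not_is_CPP_axis_curved:
  assumes u: "l4pow4 u = 1" "fst u * snd u = 0" and v: "l4pow4 v = 1" "fst v * snd v \<noteq> 0"
  shows "\<not> is_CPP u v"
proof
  assume "is_CPP u v"
  then obtain r \<mu> where "0 < r" "0 < \<mu>" and cpp: "\<And>z w a b.
     cube_pairing u z = 0 \<Longrightarrow> l4pow4 z = 1 \<Longrightarrow> cube_pairing v w = 0 \<Longrightarrow> l4pow4 w = 1 \<Longrightarrow>
     l4pow4 ((a - 1) *\<^sub>R u + b *\<^sub>R z) < r ^ 4 \<Longrightarrow> l4pow4 (a *\<^sub>R u + b *\<^sub>R z) = 1 \<Longrightarrow>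
     l4pow4 (a *\<^sub>R v + (b * \<mu>) *\<^sub>R w) \<le> 1"
    unfolding is_CPP_iff by blast
  obtain z where z: "l4pow4 z = 1" "cube_pairing u z = 0"
    using exists_unit_cube_orth by blast
  obtain w where w: "l4pow4 w = 1" "cube_pairing v w = 0"
    using exists_unit_cube_orth by blast
  define c where "c = quad_coeff v w"
  define d where "d = cubic_coeff v w"
  have "0 < fst v ^ 4 * snd v ^ 12 / 2"
    using v by simp
  then have c: "0 < c" "c \<le> 1"
    using quad_coeff_orth_ge[OF v(1) w] quad_coeff_unit_le_1[OF v(1) w(1)] by (simp_all add: c_def)
  have d: "\<bar>d\<bar> \<le> 2"
    using abs_cubic_coeff_unit_le_2[OF v(1) w(1)] by (simp add: d_def)
  define t where "t = min (min 1 (r / 2)) (min (c / (8 * \<mu>)) (\<mu> * c))"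
  have "t \<le> c / (8 * \<mu>)"
    by (simp add: t_def)
  then have "t * \<mu> \<le> c / 8"
    using \<open>0 < \<mu>\<close> by (simp add: le_divide_eq mult_ac)
  then have t: "0 < t" "t \<le> 1" "t \<le> r / 2" "t * \<mu> \<le> c / 8" "t \<le> \<mu> * c"
    using \<open>0 < r\<close> \<open>0 < \<mu>\<close> c by (simp_all add: t_def)
  obtain a where a: "0 < a" "a ^ 4 * (1 + t ^ 4) = 1"
    and "l4pow4 (a *\<^sub>R u + (a * t) *\<^sub>R z) = 1" "l4pow4 ((a - 1) *\<^sub>R u + (a * t) *\<^sub>R z) < r ^ 4"
    using axis_sphere_point_near[OF u z t(1-3)] by blast
  then have "l4pow4 (a *\<^sub>R v + (a * t * \<mu>) *\<^sub>R w) \<le> 1"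
    using cpp[OF z(2,1) w(2,1)] by blast
  moreover have "l4pow4 (a *\<^sub>R v + (a * t * \<mu>) *\<^sub>R w)
      = a ^ 4 * (1 + (6 * c * (t * \<mu>) ^ 2 + 4 * d * (t * \<mu>) ^ 3 + (t * \<mu>) ^ 4))"
    by (simp add: l4pow4_scaleR_add_orth[OF v(1) w(1,2)] c_def d_def algebra_simps
        power2_eq_square power3_eq_cube power4_eq_xxxx)
  moreover have "a ^ 4 * (1 + t ^ 4) < a ^ 4 * (1 + (6 * c * (t * \<mu>) ^ 2 + 4 * d * (t * \<mu>) ^ 3 + (t * \<mu>) ^ 4))"
    using quartic_gain[OF c d \<open>0 < \<mu>\<close> t(1,4,5)] a(1) by simp
  ultimately show False
    using a(2) by simp
qed

lemma is_CPP_of_quad_coeff_ge: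
  assumes u: "l4pow4 u = 1" and v: "l4pow4 v = 1" and "0 < \<delta>" "\<delta> \<le> 1"
    and curv: "\<And>z. l4pow4 z = 1 \<Longrightarrow> cube_pairing u z = 0 \<Longrightarrow> \<delta> \<le> quad_coeff u z"
  shows "is_CPP u v"
proof -
  have bound: "l4pow4 (a *\<^sub>R v + (b * (\<delta> / 3)) *\<^sub>R w) \<le> 1"
    if z: "cube_pairing u z = 0" "l4pow4 z = 1" and w: "cube_pairing v w = 0" "l4pow4 w = 1"
      and near: "l4pow4 ((a - 1) *\<^sub>R u + b *\<^sub>R z) < (\<delta> / 24) ^ 4"
      and on_sphere: "l4pow4 (a *\<^sub>R u + b *\<^sub>R z) = 1"
    for z w a b
  proof -
    have "\<bar>a - 1\<bar> < \<delta> / 24" "\<bar>b\<bar> < 3 * (\<delta> / 24)"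
      using orth_ball_bounds[OF u z(2,1) _ near] \<open>0 < \<delta>\<close> by simp_all
    moreover have "1 / 2 < \<bar>a\<bar>"
      using calculation(1) \<open>\<delta> \<le> 1\<close> by linarith
    then have "\<delta> / 4 * (1 / 2) \<le> \<delta> / 4 * \<bar>a\<bar>"
      using \<open>0 < \<delta>\<close> by (intro mult_left_mono) auto
    ultimately have b: "\<bar>b\<bar> \<le> \<delta> / 4 * \<bar>a\<bar>"
      by linarith
    have "\<bar>b\<bar> * (\<delta> / 3) \<le> \<bar>b\<bar>"
      using \<open>0 < \<delta>\<close> \<open>\<delta> \<le> 1\<close> by (intro mult_left_le) simp_all
    moreover have "\<delta> * \<bar>a\<bar> \<le> \<bar>a\<bar>"
      using \<open>0 < \<delta>\<close> \<open>\<delta> \<le> 1\<close> by (intro mult_left_le_one_le) simp_all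
    ultimately have small: "\<bar>b * (\<delta> / 3)\<bar> \<le> \<bar>a\<bar> / 4"
      using b \<open>0 < \<delta>\<close> by (simp add: abs_mult)
    have "6 * a ^ 2 * (b * (\<delta> / 3)) ^ 2 * quad_coeff v w + 4 * a * (b * (\<delta> / 3)) ^ 3 * cubic_coeff v w
        + (b * (\<delta> / 3)) ^ 4 \<le> 9 * a ^ 2 * (b * (\<delta> / 3)) ^ 2"
      by (intro quartic_upper_bound quad_coeff_nonneg quad_coeff_unit_le_1 abs_cubic_coeff_unit_le_2
          v w(2) small)
    also have "\<dots> = \<delta> * (\<delta> * (a ^ 2 * b ^ 2))"
      by (simp add: power_mult_distrib power_divide power2_eq_square mult_ac)
    also have "\<dots> \<le> 4 * \<delta> * a ^ 2 * b ^ 2"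
    proof -
      have "\<delta> * (\<delta> * (a ^ 2 * b ^ 2)) \<le> 1 * (\<delta> * (a ^ 2 * b ^ 2))"
        using \<open>0 < \<delta>\<close> \<open>\<delta> \<le> 1\<close> by (intro mult_right_mono) simp_all
      moreover have "0 \<le> \<delta> * (a ^ 2 * b ^ 2)" "4 * \<delta> * a ^ 2 * b ^ 2 = 4 * (\<delta> * (a ^ 2 * b ^ 2))"
        using \<open>0 < \<delta>\<close> by (simp_all add: mult_ac)
      ultimately show ?thesis
        by linarith
    qed
    also have "\<dots> \<le> 6 * a ^ 2 * b ^ 2 * quad_coeff u z + 4 * a * b ^ 3 * cubic_coeff u z + b ^ 4"
      using curv[OF z(2,1)] abs_cubic_coeff_unit_le_2[OF u z(2)] b by (rule quartic_lower_bound)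
    finally show ?thesis
      using on_sphere
      by (simp add: l4pow4_scaleR_add_orth[OF u z(2,1)] l4pow4_scaleR_add_orth[OF v w(2,1)])
  qed
  moreover have "0 < \<delta> / 24" "0 < \<delta> / 3"
    using \<open>0 < \<delta>\<close> by simp_all
  ultimately show ?thesis
    unfolding is_CPP_iff by blast
qed

lemma is_CPP_curved:
  assumes u: "l4pow4 u = 1" "fst u * snd u \<noteq> 0" and v: "l4pow4 v = 1"
  shows "is_CPP u v"
proof (rule is_CPP_of_quad_coeff_ge[OF u(1) v])
  show "0 < fst u ^ 4 * snd u ^ 12 / 2"
    using u by simp
  have "fst u ^ 4 * snd u ^ 12 \<le> 1 * 1"
    using l4pow4_unit_abs_le_1[OF u(1)] power_le_one[of "\<bar>fst u\<bar>" 4] power_le_one[of "\<bar>snd u\<bar>" 12]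
    by (intro mult_mono) (simp_all add: power_abs)
  then show "fst u ^ 4 * snd u ^ 12 / 2 \<le> 1"
    by simp
qed (rule quad_coeff_orth_ge[OF u(1)])

theorem mainTheorem11:
  fixes x y x1 y1 :: real
  assumes "(x, y) \<in> l4sphere" and "(x1, y1) \<in> l4sphere"
  shows "\<not> is_CPP (x, y) (x1, y1) \<longleftrightarrow> (x * y = 0 \<and> x1 * y1 \<noteq> 0)"
proof -
  have u: "l4pow4 (x, y) = 1" and v: "l4pow4 (x1, y1) = 1"
    using assms by (simp_all add: l4sphere_iff)
  consider "x * y \<noteq> 0" | "x * y = 0" "x1 * y1 = 0" | "x * y = 0" "x1 * y1 \<noteq> 0"
    by blast
  then show ?thesis
  proof cases
    case 1
    then show ?thesis
      using is_CPP_curved[OF u _ v] by simp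
  next
    case 2
    then show ?thesis
      using is_CPP_axis_axis[OF u _ v] by simp
  next
    case 3
    then show ?thesis
      using not_is_CPP_axis_curved[OF u _ v] by simp
  qed
qed
end
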